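(* Let $d\ge2$, $n=3$, and let $f$ be a stable update function. For a configuration $\mathcal U^{(t)}$ of three opinions define $P^{(t)}:=\gamma_{12}^{(t)}+\gamma_{13}^{(t)}+\gamma_{23}^{(t)}$. If $\mathcal U^{(t+1)}$ is obtained from $\mathcal U^{(t)}$ by any single interaction, then $P^{(t+1)}\le P^{(t)}$.
   Context: Opinions are unit vectors in $\mathbb R^d$; a configuration is a tuple $(\vec u_1,\vec u_2,\vec u_3)$, $A_{ij}=\langle\vec u_i,\vec u_j\rangle$. An interaction $(i,j)$, $i\ne j$, replaces $\vec u_i$ by $\vec w/\|\vec w\|$ with $\vec w=\vec u_i+f(A_{ij})\vec u_j$, leaving other opinions unchanged. $f:[-1,1]\to\mathbb R$ is stable if continuous and $\operatorname{sign}f(A)=\operatorname{sign}A$ for all $A$. The angle is $\alpha(\vec u,\vec v)=\arccos\langle\vec u,\vec v\rangle\in[0,\pi]$ and the effective angle is $\gamma(\vec u,\vec v)=\min(\alpha(\vec u,\vec v),\pi-\alpha(\vec u,\vec v))$; $\gamma_{ij}^{(t)}=\gamma(\vec u_i^{(t)},\vec u_j^{(t)})$. *)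

theory Defs
  imports "HOL-Analysis.Analysis"
begin

definition stable :: "(real \<Rightarrow> real) \<Rightarrow> bool" where
  "stable f \<longleftrightarrow> continuous_on {-1..1} f \<and> (\<forall>A\<in>{-1..1}. sgn (f A) = sgn A)"

definition opinion_angle :: "real^'d \<Rightarrow> real^'d \<Rightarrow> real" where
  "opinion_angle u v = arccos (inner u v)"

definition eff_angle :: "real^'d \<Rightarrow> real^'d \<Rightarrow> real" where
  "eff_angle u v = min (opinion_angle u v) (pi - opinion_angle u v)"

definition interact :: "(real \<Rightarrow> real) \<Rightarrow> (nat \<Rightarrow> real^'d) \<Rightarrow> nat \<Rightarrow> nat \<Rightarrow> (nat \<Rightarrow> real^'d)" where
  "interact f U i j =
     (let w = U i + f (inner (U i) (U j)) *\<^sub>R U j in U(i := inverse (norm w) *\<^sub>R w))"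

definition potential3 :: "(nat \<Rightarrow> real^'d) \<Rightarrow> real" where
  "potential3 U = eff_angle (U 1) (U 2) + eff_angle (U 1) (U 3) + eff_angle (U 2) (U 3)"

end

theory Submission
  imports Defs
begin

text \<open>The effective angle is the angle metric of the real projective space, so the triangle
inequality holds for it. An interaction of opinion \<open>i\<close> with opinion \<open>j\<close> moves \<open>u\<^sub>i\<close> along the
shortest great-circle arc from \<open>u\<^sub>i\<close> towards \<open>\<sigma> u\<^sub>j\<close>, where \<open>\<sigma> = \<plusminus>1\<close> is the sign of
\<open>\<langle>u\<^sub>i, u\<^sub>j\<rangle>\<close>. The distance travelled, \<open>\<alpha>(u\<^sub>i, u\<^sub>i')\<close>, is exactly the decrease
\<open>\<gamma>\<^sub>i\<^sub>j - \<gamma>(u\<^sub>i', u\<^sub>j)\<close>, while by the triangle inequality \<open>\<gamma>\<^sub>i\<^sub>k\<close> grows by at most that much.\<close>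

lemma abs_inner_le_1:
  fixes x y :: "'a::real_inner"
  assumes "norm x = 1" "norm y = 1"
  shows "\<bar>inner x y\<bar> \<le> 1"
  using Cauchy_Schwarz_ineq2[of x y] assms by simp

lemma min_arccos_pi_minus_arccos:
  assumes "\<bar>a\<bar> \<le> 1"
  shows "min (arccos a) (pi - arccos a) = arccos \<bar>a\<bar>"
proof (cases "0 \<le> a")
  case True
  then have "arccos a \<le> pi / 2" using assms arccos_le_pi2 by simp
  with True show ?thesis by simp
next
  case False
  then have "arccos (- a) \<le> pi / 2" using assms arccos_le_pi2 by simp
  with False assms show ?thesis by (simp add: arccos_minus)
qed

lemma eff_angle_eq_arccos_abs_inner:
  assumes "norm u = 1" "norm v = 1"
  shows "eff_angle u v = arccos \<bar>inner u v\<bar>"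
  using min_arccos_pi_minus_arccos[OF abs_inner_le_1[OF assms]]
  by (simp add: eff_angle_def opinion_angle_def)

lemma eff_angle_commute: "eff_angle u v = eff_angle v u"
  by (simp add: eff_angle_def opinion_angle_def inner_commute)

lemma cos_add_arccos:
  assumes "\<bar>p\<bar> \<le> 1" "\<bar>q\<bar> \<le> 1"
  shows "cos (arccos p + arccos q) = p * q - sqrt (1 - p\<^sup>2) * sqrt (1 - q\<^sup>2)"
  using assms by (simp add: cos_add sin_arccos abs_le_iff)

lemma arccos_inner_triangle:
  fixes x y z :: "'a::real_inner"
  assumes nx: "norm x = 1" and ny: "norm y = 1" and nz: "norm z = 1"
  shows "arccos (inner x z) \<le> arccos (inner x y) + arccos (inner y z)"
proof -
  define p where "p = inner x y"
  define q where "q = inner y z"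
  have pq: "\<bar>p\<bar> \<le> 1" "\<bar>q\<bar> \<le> 1"
    unfolding p_def q_def using abs_inner_le_1 assms by auto
  have xz: "\<bar>inner x z\<bar> \<le> 1" using abs_inner_le_1[OF nx nz] .
  show ?thesis
  proof (cases "arccos p + arccos q \<le> pi")
    case False
    then show ?thesis using arccos_ubound xz unfolding p_def q_def by (smt (verit))
  next
    case True
    have unit: "inner x x = 1" "inner y y = 1" "inner z z = 1"
      using assms by (simp_all add: power2_norm_eq_inner[symmetric])
    define X where "X = x - p *\<^sub>R y"
    define Z where "Z = z - q *\<^sub>R y"
    have "inner X Z = inner x z - p * q"
      unfolding X_def Z_def p_def q_def using unit
      by (simp add: inner_diff_left inner_diff_right inner_commute algebra_simps)
    moreover have "norm X = sqrt (1 - p\<^sup>2)" "norm Z = sqrt (1 - q\<^sup>2)"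
      unfolding norm_eq_sqrt_inner X_def Z_def p_def q_def using unit
      by (simp_all add: inner_diff_left inner_diff_right inner_commute algebra_simps
          power2_eq_square)
    ultimately have "\<bar>inner x z - p * q\<bar> \<le> sqrt (1 - p\<^sup>2) * sqrt (1 - q\<^sup>2)"
      using Cauchy_Schwarz_ineq2[of X Z] by simp
    then have "cos (arccos p + arccos q) \<le> inner x z"
      using cos_add_arccos[OF pq] by linarith
    then have "arccos (inner x z) \<le> arccos (cos (arccos p + arccos q))"
      using xz by (intro arccos_le_arccos) (auto simp: abs_le_iff)
    also have "\<dots> = arccos p + arccos q"
      using True pq arccos_lbound by (intro arccos_cos) (auto simp: abs_le_iff add_nonneg_nonneg)
    finally show ?thesis unfolding p_def q_def .
  qed
qed

lemma eff_angle_triangle: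
  fixes x y z :: "real^'d"
  assumes nx: "norm x = 1" and ny: "norm y = 1" and nz: "norm z = 1"
  shows "eff_angle x z \<le> eff_angle x y + eff_angle y z"
proof -
  define s :: real where "s = (if 0 \<le> inner x y then 1 else -1)"
  define t :: real where "t = (if 0 \<le> inner y z then 1 else -1)"
  have st: "\<bar>s\<bar> \<le> 1" "\<bar>t\<bar> \<le> 1" unfolding s_def t_def by simp_all
  have "\<bar>s * t * inner x z\<bar> \<le> \<bar>inner x z\<bar>"
    using st by (simp add: abs_mult mult_le_one mult_left_le_one_le)
  then have "arccos \<bar>inner x z\<bar> \<le> arccos (s * t * inner x z)"
    using abs_inner_le_1[OF nx nz] by (intro arccos_le_arccos) (auto simp: abs_le_iff)
  also have "\<dots> = arccos (inner (s *\<^sub>R x) (t *\<^sub>R z))"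
    by (simp add: algebra_simps)
  also have "\<dots> \<le> arccos (inner (s *\<^sub>R x) y) + arccos (inner y (t *\<^sub>R z))"
    by (rule arccos_inner_triangle) (use assms in \<open>auto simp: s_def t_def\<close>)
  also have "\<dots> = arccos \<bar>inner x y\<bar> + arccos \<bar>inner y z\<bar>"
    by (simp add: s_def t_def)
  finally show ?thesis
    using assms by (simp add: eff_angle_eq_arccos_abs_inner)
qed

lemma arccos_inner_sgn_add:
  fixes x v :: "'a::real_inner"
  assumes nx: "norm x = 1" and nv: "norm v = 1" and a0: "0 \<le> inner x v" and c0: "0 \<le> c"
  defines "x' \<equiv> sgn (x + c *\<^sub>R v)"
  shows "norm x' = 1"
    and "arccos (inner x x') + arccos (inner x' v) = arccos (inner x v)"
proof -
  define a where "a = inner x v"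
  define N where "N = norm (x + c *\<^sub>R v)"
  have unit: "inner x x = 1" "inner v v = 1"
    using nx nv by (simp_all add: power2_norm_eq_inner[symmetric])
  have N2: "N\<^sup>2 = 1 + 2 * c * a + c\<^sup>2"
    unfolding N_def power2_norm_eq_inner a_def using unit
    by (simp add: inner_add_left inner_add_right inner_commute algebra_simps power2_eq_square)
  have "1 \<le> N\<^sup>2" using N2 a0 c0 unfolding a_def by simp
  then have "N \<noteq> 0" by auto
  then have Npos: "0 < N" unfolding N_def by simp
  have x': "x' = (1 / N) *\<^sub>R (x + c *\<^sub>R v)"
    unfolding x'_def sgn_div_norm N_def by (simp add: divide_inverse_commute)
  show nx': "norm x' = 1" using Npos unfolding x' N_def by simp
  define P where "P = (1 + c * a) / N"
  define Q where "Q = (a + c) / N"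
  have P: "inner x x' = P" and Q: "inner x' v = Q"
    unfolding x' P_def Q_def a_def using unit
    by (simp_all add: inner_add_left inner_add_right inner_commute algebra_simps add_divide_distrib)
  have PQ: "0 \<le> P" "0 \<le> Q" "\<bar>P\<bar> \<le> 1" "\<bar>Q\<bar> \<le> 1"
    using Npos a0 c0 abs_inner_le_1[OF nx nx'] abs_inner_le_1[OF nx' nv] P Q
    unfolding P_def Q_def a_def by auto
  define r where "r = sqrt (1 - a\<^sup>2)"
  have r2: "r\<^sup>2 = 1 - a\<^sup>2" and r0: "0 \<le> r"
    unfolding r_def using abs_inner_le_1[OF nx nv] by (simp_all add: a_def abs_square_le_1)
  \<comment> \<open>both sines are read off from \<open>N\<^sup>2 - (1 + c a)\<^sup>2 = c\<^sup>2 r\<^sup>2\<close> and \<open>N\<^sup>2 - (a + c)\<^sup>2 = r\<^sup>2\<close>\<close>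
  have sinP: "sqrt (1 - P\<^sup>2) = c * r / N"
  proof (rule real_sqrt_unique)
    have "(c * r)\<^sup>2 = N\<^sup>2 - (1 + c * a)\<^sup>2"
      unfolding power_mult_distrib r2 N2 by (simp add: power2_eq_square algebra_simps)
    then show "(c * r / N)\<^sup>2 = 1 - P\<^sup>2"
      using Npos by (simp add: P_def power_divide field_simps)
  qed (use c0 r0 Npos in simp)
  have sinQ: "sqrt (1 - Q\<^sup>2) = r / N"
  proof (rule real_sqrt_unique)
    have "r\<^sup>2 = N\<^sup>2 - (a + c)\<^sup>2"
      unfolding r2 N2 by (simp add: power2_eq_square algebra_simps)
    then show "(r / N)\<^sup>2 = 1 - Q\<^sup>2"
      using Npos by (simp add: Q_def power_divide field_simps)
  qed (use r0 Npos in simp)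
  have "cos (arccos P + arccos Q) = P * Q - (c * r / N) * (r / N)"
    using cos_add_arccos[OF PQ(3,4)] sinP sinQ by simp
  also have "\<dots> = ((1 + c * a) * (a + c) - c * r\<^sup>2) / N\<^sup>2"
    using Npos unfolding P_def Q_def by (simp add: power2_eq_square field_simps)
  also have "\<dots> = a * N\<^sup>2 / N\<^sup>2"
    unfolding r2 N2 by (simp add: algebra_simps power2_eq_square)
  also have "\<dots> = a" using Npos by simp
  finally have "arccos (cos (arccos P + arccos Q)) = arccos a" by simp
  moreover have "arccos (cos (arccos P + arccos Q)) = arccos P + arccos Q"
    using PQ arccos_lbound arccos_le_pi2[of P] arccos_le_pi2[of Q]
    by (intro arccos_cos) (auto simp: abs_le_iff)
  ultimately show "arccos (inner x x') + arccos (inner x' v) = arccos (inner x v)"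
    unfolding P Q a_def by simp
qed

lemma eff_angle_le_arccos:
  assumes "norm u = 1" "norm v = 1" "\<bar>t\<bar> \<le> 1"
  shows "eff_angle u v \<le> arccos (t * inner u v)"
proof -
  have "\<bar>t * inner u v\<bar> \<le> \<bar>inner u v\<bar>" "\<bar>inner u v\<bar> \<le> 1"
    using assms abs_inner_le_1 by (auto simp: abs_mult mult_left_le_one_le)
  then have "arccos \<bar>inner u v\<bar> \<le> arccos (t * inner u v)"
    by (intro arccos_le_arccos) (auto simp: abs_le_iff)
  then show ?thesis
    using assms by (simp add: eff_angle_eq_arccos_abs_inner)
qed

lemma eff_angle_sgn_add_le:
  fixes x y z :: "real^'d"
  assumes nx: "norm x = 1" and ny: "norm y = 1" and nz: "norm z = 1"
    and sgn_b: "sgn b = sgn (inner x y)"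
  defines "x' \<equiv> sgn (x + b *\<^sub>R y)"
  shows "eff_angle x' y + eff_angle x' z \<le> eff_angle x y + eff_angle x z"
proof -
  define \<sigma> :: real where "\<sigma> = (if 0 \<le> inner x y then 1 else -1)"
  define v where "v = \<sigma> *\<^sub>R y"
  have \<sigma>: "\<bar>\<sigma>\<bar> = 1" and xv: "inner x v = \<bar>inner x y\<bar>" unfolding \<sigma>_def v_def by auto
  have nv: "norm v = 1" using ny \<sigma> by (simp add: v_def)
  have "b = \<bar>b\<bar> * \<sigma>"
    using sgn_b unfolding \<sigma>_def by (auto simp: sgn_if split: if_splits)
  then have x': "x' = sgn (x + \<bar>b\<bar> *\<^sub>R v)" unfolding x'_def v_def by (metis scaleR_scaleR)
  obtain nx': "norm x' = 1"
    and arc: "arccos (inner x x') + arccos (inner x' v) = arccos (inner x v)"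
    using arccos_inner_sgn_add[OF nx nv _ abs_ge_zero, of b] xv unfolding x'[symmetric] by auto
  have "eff_angle x' y \<le> arccos (inner x' v)"
    using eff_angle_le_arccos[OF nx' ny] \<sigma> by (simp add: v_def)
  moreover have "eff_angle x' z \<le> arccos (inner x x') + eff_angle x z"
    using eff_angle_triangle[OF nx' nx nz] eff_angle_le_arccos[OF nx' nx, of 1]
    by (simp add: inner_commute)
  moreover have "eff_angle x y = arccos (inner x v)"
    using nx ny by (simp add: xv eff_angle_eq_arccos_abs_inner)
  ultimately show ?thesis using arc by linarith
qed

lemma potential3_eq:
  assumes "i \<in> {1,2,3::nat}" "j \<in> {1,2,3}" "k \<in> {1,2,3}" "i \<noteq> j" "i \<noteq> k" "j \<noteq> k"
  shows "potential3 U = eff_angle (U i) (U j) + eff_angle (U i) (U k) + eff_angle (U j) (U k)"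
  using assms unfolding potential3_def
  by (auto simp: eff_angle_commute[of "U 2" "U (Suc 0)"] eff_angle_commute[of "U 3" "U (Suc 0)"]
      eff_angle_commute[of "U 3" "U 2"])

theorem mainTheorem17:
  fixes f :: "real \<Rightarrow> real" and U :: "nat \<Rightarrow> real^'d" and i j :: nat
  assumes "CARD('d) \<ge> 2"
    and "stable f"
    and "\<forall>k\<in>{1,2,3}. norm (U k) = 1"
    and "i \<in> {1,2,3}" and "j \<in> {1,2,3}" and "i \<noteq> j"
  shows "potential3 (interact f U i j) \<le> potential3 U"
proof -
  \<comment> \<open>only the sign condition of stability is used\<close>
  have "\<exists>k\<in>{1,2,3}. i \<noteq> k \<and> j \<noteq> k"
    using assms(4-6) by auto
  then obtain k where k: "k \<in> {1,2,3}" "i \<noteq> k" "j \<noteq> k" by blast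
  then have unit: "norm (U i) = 1" "norm (U j) = 1" "norm (U k) = 1"
    using assms(3-5) by auto
  define b where "b = f (inner (U i) (U j))"
  define x' where "x' = sgn (U i + b *\<^sub>R U j)"
  have "sgn b = sgn (inner (U i) (U j))"
    using assms(2) abs_inner_le_1[OF unit(1,2)] by (simp add: b_def stable_def abs_le_iff)
  then have step:
      "eff_angle x' (U j) + eff_angle x' (U k) \<le> eff_angle (U i) (U j) + eff_angle (U i) (U k)"
    unfolding x'_def by (rule eff_angle_sgn_add_le[OF unit])
  have "interact f U i j = U(i := x')"
    by (simp add: interact_def b_def x'_def Let_def sgn_div_norm)
  then have "potential3 (interact f U i j)
      = eff_angle x' (U j) + eff_angle x' (U k) + eff_angle (U j) (U k)"
    using potential3_eq[OF assms(4,5) k(1) assms(6) k(2,3), of "U(i := x')"] assms(6) k(2,3) by simp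
  also have "\<dots> \<le> potential3 U"
    using step potential3_eq[OF assms(4,5) k(1) assms(6) k(2,3), of U] by simp
  finally show ?thesis .
qed

end
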